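(* Let $G=(V,E)$ be a finite, connected, undirected graph with $n\ge 2$ vertices. Then for every $r\ge 1$, the fixation probability satisfies $f_{G,r}\ge \frac{1}{n}$.
   Context: The Moran process on $G$ with mutant fitness $r>0$ is the Markov chain $(X_i)_{i\ge0}$ whose state $X_i\subseteq V$ is the set of vertices occupied by mutants; every other vertex is occupied by a non-mutant of fitness $1$. Write $W(S)=r|S|+|V\setminus S|$ for the total fitness. Given $X_i=S$, one step is: choose a vertex $x$ with probability $r/W(S)$ if $x\in S$ and $1/W(S)$ if $x\notin S$; then choose a neighbour $y$ of $x$ uniformly at random; set $X_{i+1}=S\cup\{y\}$ if $x\in S$ and $X_{i+1}=S\setminus\{y\}$ if $x\notin S$. Fixation means $X_i=V$ for some $i$. For $x\in V$, $f_{G,r}(x)$ is the probability of fixation when $X_0=\{x\}$, and $f_{G,r}=\frac1n\sum_{x\in V}f_{G,r}(x)$ is the fixation probability when the initial single mutant is placed at a uniformly random vertex. *)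

theory Defs
  imports Complex_Main
begin

definition graph :: "'a set \<Rightarrow> ('a \<Rightarrow> 'a \<Rightarrow> bool) \<Rightarrow> bool" where
  "graph V E \<longleftrightarrow> finite V \<and> (\<forall>x y. E x y \<longrightarrow> x \<in> V \<and> y \<in> V)
     \<and> (\<forall>x y. E x y \<longrightarrow> E y x) \<and> (\<forall>x. \<not> E x x)"

definition connected_graph :: "'a set \<Rightarrow> ('a \<Rightarrow> 'a \<Rightarrow> bool) \<Rightarrow> bool" where
  "connected_graph V E \<longleftrightarrow> graph V E \<and>
     (\<forall>x\<in>V. \<forall>y\<in>V. (x, y) \<in> {(u, v). E u v}\<^sup>*)"

definition nbrs :: "'a set \<Rightarrow> ('a \<Rightarrow> 'a \<Rightarrow> bool) \<Rightarrow> 'a \<Rightarrow> 'a set" where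
  "nbrs V E x = {y \<in> V. E x y}"

definition total_fitness :: "'a set \<Rightarrow> real \<Rightarrow> 'a set \<Rightarrow> real" where
  "total_fitness V r S = r * real (card S) + real (card (V - S))"

definition fit :: "real \<Rightarrow> 'a set \<Rightarrow> 'a \<Rightarrow> real" where
  "fit r S x = (if x \<in> S then r else 1)"

text \<open>\<open>reach_V V E r k S\<close> = probability that X_k = V given X_0 = S in the Moran
 process (one step: choose x with prob. fit/W, then a uniform neighbour y).\<close>
fun reach_V :: "'a set \<Rightarrow> ('a \<Rightarrow> 'a \<Rightarrow> bool) \<Rightarrow> real \<Rightarrow> nat \<Rightarrow> 'a set \<Rightarrow> real" where
  "reach_V V E r 0 S = (if S = V then 1 else 0)"
| "reach_V V E r (Suc k) S =
     (\<Sum>x\<in>V. \<Sum>y\<in>nbrs V E x.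
        (fit r S x / total_fitness V r S) * (1 / real (card (nbrs V E x))) *
        reach_V V E r k (if x \<in> S then insert y S else S - {y}))"

text \<open>Since V is absorbing, fixation (X_i = V for some i) is the increasing
 limit (supremum) of P(X_k = V).\<close>
definition fixation_prob :: "'a set \<Rightarrow> ('a \<Rightarrow> 'a \<Rightarrow> bool) \<Rightarrow> real \<Rightarrow> 'a set \<Rightarrow> real" where
  "fixation_prob V E r S = (SUP k. reach_V V E r k S)"

definition fix_prob_vertex :: "'a set \<Rightarrow> ('a \<Rightarrow> 'a \<Rightarrow> bool) \<Rightarrow> real \<Rightarrow> 'a \<Rightarrow> real" where
  "fix_prob_vertex V E r x = fixation_prob V E r {x}"

definition fix_prob :: "'a set \<Rightarrow> ('a \<Rightarrow> 'a \<Rightarrow> bool) \<Rightarrow> real \<Rightarrow> real" where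
  "fix_prob V E r = (1 / real (card V)) * (\<Sum>x\<in>V. fix_prob_vertex V E r x)"

end

theory Submission imports Defs begin

(* The step of the Moran process acts on functions of the state by the
   expectation operator  moran_step g S = E[g(X_1) | X_0 = S],  and reach_V is the
   k-fold iterate applied to the indicator of the full state V.  On a graph every
   state S has the potential  phi(S) = sum over v in S of 1/deg(v).  For r >= 1 the
   potential is a submartingale: the expected change in one step is a sum over
   boundary edges whose positive (mutant reproduces) and negative (non-mutant
   reproduces) contributions cancel by symmetry of the edge relation, up to the
   factor r >= 1.  Moreover phi^2 increases in expectation by at least 1/n^4 in every
   transient state (neither empty nor full), which bounds the probability of still
   being transient after k steps by C/k.  Since phi(U) <= phi(V) * ([U = V] +
   [U transient]), the submartingale property gives  fixation_prob(S) >=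
   phi(S)/phi(V).  Summing over the singletons S = {x} gives the theorem. *)

definition moran_update :: "'a set \<Rightarrow> 'a \<Rightarrow> 'a \<Rightarrow> 'a set" where
  "moran_update S x y = (if x \<in> S then insert y S else S - {y})"

definition moran_step ::
  "'a set \<Rightarrow> ('a \<Rightarrow> 'a \<Rightarrow> bool) \<Rightarrow> real \<Rightarrow> ('a set \<Rightarrow> real) \<Rightarrow> 'a set \<Rightarrow> real" where
  "moran_step V E r g S = (\<Sum>x\<in>V. \<Sum>y\<in>nbrs V E x.
      (fit r S x / total_fitness V r S) * (1 / real (card (nbrs V E x))) *
      g (moran_update S x y))"

definition full_indicator :: "'a set \<Rightarrow> 'a set \<Rightarrow> real" where
  "full_indicator V S = (if S = V then 1 else 0)"

definition transient :: "'a set \<Rightarrow> 'a set \<Rightarrow> real" where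
  "transient V S = (if S \<noteq> {} \<and> S \<noteq> V then 1 else 0)"

definition inv_degree_sum :: "'a set \<Rightarrow> ('a \<Rightarrow> 'a \<Rightarrow> bool) \<Rightarrow> 'a set \<Rightarrow> real" where
  "inv_degree_sum V E S = (\<Sum>v\<in>S. 1 / real (card (nbrs V E v)))"

lemma reach_V_eq_iter: "reach_V V E r k = (moran_step V E r ^^ k) (full_indicator V)"
  by (induction k) (auto simp: full_indicator_def moran_step_def moran_update_def fun_eq_iff)

lemma moran_step_linear:
  "moran_step V E r (\<lambda>U. a * f U + b * g U) S = a * moran_step V E r f S + b * moran_step V E r g S"
  unfolding moran_step_def sum_distrib_left sum.distrib[symmetric]
  by (intro sum.cong refl) (simp add: algebra_simps add_divide_distrib)

lemma moran_iter_linear: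
  "(moran_step V E r ^^ k) (\<lambda>U. a * f U + b * g U) S
     = a * (moran_step V E r ^^ k) f S + b * (moran_step V E r ^^ k) g S"
proof (induction k arbitrary: S)
  case 0
  then show ?case by simp
next
  case (Suc k)
  have "(moran_step V E r ^^ k) (\<lambda>U. a * f U + b * g U)
      = (\<lambda>U. a * (moran_step V E r ^^ k) f U + b * (moran_step V E r ^^ k) g U)"
    using Suc.IH by (rule ext)
  then show ?case by (simp only: funpow.simps(2) o_apply moran_step_linear)
qed

lemma moran_iter_Suc_right:
  "(moran_step V E r ^^ Suc k) f S = (moran_step V E r ^^ k) (moran_step V E r f) S"
  by (simp only: funpow_Suc_right o_apply)

lemma sum_nbrs_swap:
  assumes "finite V" and "\<And>x y. E x y \<Longrightarrow> E y x"
  shows "(\<Sum>x\<in>V. \<Sum>y\<in>nbrs V E x. F x y) = (\<Sum>x\<in>V. \<Sum>y\<in>nbrs V E x. F y x)"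
proof -
  have as_matrix: "(\<Sum>x\<in>V. \<Sum>y\<in>nbrs V E x. G x y) = (\<Sum>x\<in>V. \<Sum>y\<in>V. if E x y then G x y else 0)"
    for G :: "'a \<Rightarrow> 'a \<Rightarrow> 'b"
    unfolding nbrs_def using assms(1) by (simp add: sum.inter_filter)
  have sym: "E x y = E y x" for x y
    using assms(2) by blast
  have "(\<Sum>x\<in>V. \<Sum>y\<in>V. if E x y then F x y else 0) = (\<Sum>y\<in>V. \<Sum>x\<in>V. if E y x then F x y else 0)"
    by (subst sum.swap) (simp only: sym)
  then show ?thesis
    by (simp only: as_matrix)
qed

lemma path_crosses_boundary:
  assumes "(a, b) \<in> {(u, v). E u v}\<^sup>*" and "a \<in> S" and "b \<notin> S"
  shows "\<exists>x y. x \<in> S \<and> y \<notin> S \<and> E x y"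
  using assms
proof (induction rule: rtrancl_induct)
  case base
  then show ?case by simp
next
  case (step c d)
  then show ?case by (cases "c \<in> S") auto
qed

locale moran_chain =
  fixes V :: "'a set" and E :: "'a \<Rightarrow> 'a \<Rightarrow> bool" and r :: real
  assumes graph: "graph V E"
    and nonempty: "V \<noteq> {}"
    and no_isolated: "\<And>x. x \<in> V \<Longrightarrow> nbrs V E x \<noteq> {}"
    and r_pos: "r > 0"
begin

abbreviation step :: "('a set \<Rightarrow> real) \<Rightarrow> 'a set \<Rightarrow> real" where
  "step \<equiv> moran_step V E r"

abbreviation deg :: "'a \<Rightarrow> real" where
  "deg x \<equiv> real (card (nbrs V E x))"

lemma finite_V: "finite V"
  using graph by (simp add: graph_def)

lemma edge_sym: "E x y \<Longrightarrow> E y x"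
  using graph by (simp add: graph_def)

lemma edge_in_V: "E x y \<Longrightarrow> x \<in> V \<and> y \<in> V"
  using graph by (simp add: graph_def)

lemma nbrs_subset: "nbrs V E x \<subseteq> V"
  by (auto simp: nbrs_def)

lemma finite_nbrs: "finite (nbrs V E x)"
  using finite_V nbrs_subset by (rule finite_subset[rotated])

lemma deg_pos: "x \<in> V \<Longrightarrow> deg x > 0"
  using no_isolated finite_nbrs by (simp add: card_gt_0_iff)

lemma card_split: "S \<subseteq> V \<Longrightarrow> real (card V) = real (card S) + real (card (V - S))"
  using finite_V by (simp add: card_Diff_subset card_mono finite_subset)

lemma total_fitness_pos:
  assumes S: "S \<subseteq> V"
  shows "total_fitness V r S > 0"
proof (cases "S = {}")
  case True
  then show ?thesis
    using nonempty finite_V by (simp add: total_fitness_def card_gt_0_iff)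
next
  case False
  then have "real (card S) > 0"
    using S finite_V by (simp add: card_gt_0_iff finite_subset)
  then show ?thesis
    using r_pos by (simp add: total_fitness_def add_pos_nonneg)
qed

lemma sum_fit: "S \<subseteq> V \<Longrightarrow> (\<Sum>x\<in>V. fit r S x) = total_fitness V r S"
proof -
  assume S: "S \<subseteq> V"
  have "(\<Sum>x\<in>V. fit r S x) = (\<Sum>x\<in>V \<inter> {x. x \<in> S}. r) + (\<Sum>x\<in>V \<inter> - {x. x \<in> S}. 1)"
    unfolding fit_def using finite_V by (rule sum.If_cases)
  also have "V \<inter> {x. x \<in> S} = S"
    using S by auto
  also have "V \<inter> - {x. x \<in> S} = V - S"
    by auto
  finally show ?thesis by (simp add: total_fitness_def)
qed

lemma update_subset: "S \<subseteq> V \<Longrightarrow> y \<in> nbrs V E x \<Longrightarrow> moran_update S x y \<subseteq> V"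
  using nbrs_subset by (auto simp: moran_update_def)

lemma transition_weight_nonneg: "S \<subseteq> V \<Longrightarrow> 0 \<le> fit r S x / total_fitness V r S * (1 / deg x)"
  using total_fitness_pos[of S] r_pos by (auto simp: fit_def)

lemma step_mono:
  assumes "S \<subseteq> V" and "\<And>U. U \<subseteq> V \<Longrightarrow> f U \<le> g U"
  shows "step f S \<le> step g S"
  unfolding moran_step_def
  using assms transition_weight_nonneg update_subset
  by (intro sum_mono mult_left_mono) auto

lemma step_const:
  assumes S: "S \<subseteq> V"
  shows "step (\<lambda>U. a) S = a"
proof -
  have "step (\<lambda>U. a) S = (\<Sum>x\<in>V. fit r S x / total_fitness V r S * a)"
    unfolding moran_step_def using deg_pos by (intro sum.cong refl) simp
  also have "\<dots> = (\<Sum>x\<in>V. fit r S x) / total_fitness V r S * a"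
    by (simp add: sum_divide_distrib sum_distrib_right)
  also have "\<dots> = a"
    using sum_fit[OF S] total_fitness_pos[OF S] by simp
  finally show ?thesis .
qed

lemma iter_mono:
  assumes "\<And>U. U \<subseteq> V \<Longrightarrow> f U \<le> g U"
  shows "S \<subseteq> V \<Longrightarrow> (step ^^ k) f S \<le> (step ^^ k) g S"
proof (induction k arbitrary: S)
  case 0
  then show ?case using assms by simp
next
  case (Suc k)
  then show ?case by (simp add: step_mono)
qed

lemma iter_cong:
  assumes "\<And>U. U \<subseteq> V \<Longrightarrow> f U = g U" and "S \<subseteq> V"
  shows "(step ^^ k) f S = (step ^^ k) g S"
  using iter_mono[of f g S k] iter_mono[of g f S k] assms by force

lemma iter_const: "S \<subseteq> V \<Longrightarrow> (step ^^ k) (\<lambda>U. a) S = a"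
proof (induction k arbitrary: S)
  case 0
  then show ?case by simp
next
  case (Suc k)
  have "(step ^^ k) (step (\<lambda>U. a)) S = (step ^^ k) (\<lambda>U. a) S"
    using step_const Suc.prems by (rule iter_cong)
  then show ?case
    using Suc by (simp only: moran_iter_Suc_right)
qed

lemma step_minus_const: "S \<subseteq> V \<Longrightarrow> step (\<lambda>U. g U - c) S = step g S - c"
  using moran_step_linear[of V E r 1 g "-1" "\<lambda>U. c" S] step_const[of S c] by simp

lemma step_square:
  assumes S: "S \<subseteq> V"
  shows "step (\<lambda>U. (g U)\<^sup>2) S = step (\<lambda>U. (g U - g S)\<^sup>2) S + 2 * g S * step g S - (g S)\<^sup>2"
proof -
  have "(\<lambda>U. (g U)\<^sup>2) = (\<lambda>U. (1 * (g U - g S)\<^sup>2 + (2 * g S) * g U) - (g S)\<^sup>2)"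
    by (rule ext) (simp add: power2_eq_square algebra_simps)
  then show ?thesis
    using step_minus_const[OF S] moran_step_linear[of V E r 1 _ "2 * g S" g S] by simp
qed

text \<open>The empty and the full state are absorbing, so the indicator of the
  transient states is superharmonic: being transient can only stop.\<close>
lemma transient_step:
  assumes S: "S \<subseteq> V"
  shows "step (transient V) S \<le> transient V S"
proof (cases "S = {} \<or> S = V")
  case True
  have "transient V (moran_update S x y) = 0" if "x \<in> V" and "y \<in> nbrs V E x" for x y
    using True that nbrs_subset by (auto simp: transient_def moran_update_def insert_absorb)
  then have "step (transient V) S = 0"
    unfolding moran_step_def by (simp add: sum.neutral)
  then show ?thesis
    using True by (auto simp: transient_def)
next
  case False
  have "step (transient V) S \<le> step (\<lambda>U. 1) S"
    using S by (rule step_mono) (simp add: transient_def)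
  then show ?thesis
    using False step_const[OF S] by (simp add: transient_def)
qed

lemma transient_iter_antimono:
  assumes S: "S \<subseteq> V" and "j \<le> k"
  shows "(step ^^ k) (transient V) S \<le> (step ^^ j) (transient V) S"
proof (rule lift_Suc_antimono_le[of "\<lambda>k. (step ^^ k) (transient V) S"])
  show "(step ^^ Suc k) (transient V) S \<le> (step ^^ k) (transient V) S" for k
    unfolding moran_iter_Suc_right using transient_step S by (rule iter_mono)
qed (fact \<open>j \<le> k\<close>)

lemma reach_V_le_1: "S \<subseteq> V \<Longrightarrow> reach_V V E r k S \<le> 1"
  using iter_mono[of "full_indicator V" "\<lambda>U. 1" S k] iter_const[of S k 1]
  by (simp add: reach_V_eq_iter full_indicator_def)

end

locale advantageous_moran = moran_chain +
  assumes connected: "\<And>a b. a \<in> V \<Longrightarrow> b \<in> V \<Longrightarrow> (a, b) \<in> {(u, v). E u v}\<^sup>*"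
    and r_ge_1: "r \<ge> 1"
begin

abbreviation phi :: "'a set \<Rightarrow> real" where
  "phi \<equiv> inv_degree_sum V E"

lemma deg_le_card: "deg x \<le> real (card V)"
  using card_mono[OF finite_V nbrs_subset] by simp

lemma total_fitness_le: "S \<subseteq> V \<Longrightarrow> total_fitness V r S \<le> r * real (card V)"
  using card_split[of S] r_ge_1 mult_left_mono[OF r_ge_1, of "real (card (V - S))"]
  by (simp add: total_fitness_def distrib_left mult.commute)

lemma phi_nonneg: "phi U \<ge> 0"
  unfolding inv_degree_sum_def by (intro sum_nonneg) auto

lemma phi_le_phi_V: "U \<subseteq> V \<Longrightarrow> phi U \<le> phi V"
  unfolding inv_degree_sum_def by (intro sum_mono2 finite_V) auto

lemma phi_V_pos: "phi V > 0"
  unfolding inv_degree_sum_def using finite_V nonempty deg_pos by (intro sum_pos) auto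

lemma phi_update:
  assumes S: "S \<subseteq> V"
  shows "phi (moran_update S x y) - phi S
    = (if x \<in> S then (if y \<in> S then 0 else 1 / deg y) else (if y \<in> S then - (1 / deg y) else 0))"
proof -
  have "finite S"
    using S finite_V finite_subset by blast
  then show ?thesis
    by (cases "x \<in> S"; cases "y \<in> S")
      (auto simp: inv_degree_sum_def moran_update_def insert_absorb sum_diff1)
qed

definition boundary_weight :: "'a set \<Rightarrow> 'a \<Rightarrow> 'a \<Rightarrow> real" where
  "boundary_weight S x y = (if x \<in> S \<and> y \<notin> S then 1 / (deg x * deg y) else 0)"

lemma phi_change_lower_bound:
  assumes S: "S \<subseteq> V" and x: "x \<in> V" and y: "y \<in> nbrs V E x"
  shows "(boundary_weight S x y - boundary_weight S y x) / total_fitness V r S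
    \<le> fit r S x / total_fitness V r S * (1 / deg x) * (phi (moran_update S x y) - phi S)"
proof -
  define W where "W = total_fitness V r S"
  have "W > 0" and "deg x > 0" and "deg y > 0"
    using total_fitness_pos[OF S] deg_pos x y nbrs_subset by (auto simp: W_def)
  then have w_nonneg: "0 \<le> 1 / (deg x * deg y) / W"
    by simp
  consider "x \<in> S" "y \<notin> S" | "x \<notin> S" "y \<in> S" | "x \<in> S \<longleftrightarrow> y \<in> S"
    by blast
  then show ?thesis
  proof cases
    case 1
    have "1 * (1 / (deg x * deg y) / W) \<le> r * (1 / (deg x * deg y) / W)"
      using r_ge_1 w_nonneg by (rule mult_right_mono)
    then show ?thesis
      using 1 phi_update[OF S] by (simp add: boundary_weight_def fit_def W_def mult_ac)
  next
    case 2
    then show ?thesis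
      using phi_update[OF S] by (simp add: boundary_weight_def fit_def W_def mult_ac)
  next
    case 3
    then show ?thesis
      using phi_update[OF S] by (auto simp: boundary_weight_def)
  qed
qed

text \<open>The potential is a submartingale: the flows across the boundary cancel.\<close>
lemma phi_submartingale:
  assumes S: "S \<subseteq> V"
  shows "phi S \<le> step phi S"
proof -
  define W where "W = total_fitness V r S"
  have flows_cancel:
    "(\<Sum>x\<in>V. \<Sum>y\<in>nbrs V E x. boundary_weight S x y) = (\<Sum>x\<in>V. \<Sum>y\<in>nbrs V E x. boundary_weight S y x)"
    by (rule sum_nbrs_swap[OF finite_V edge_sym])
  have "(\<Sum>x\<in>V. \<Sum>y\<in>nbrs V E x. (boundary_weight S x y - boundary_weight S y x) / W)
      = (\<Sum>x\<in>V. \<Sum>y\<in>nbrs V E x. boundary_weight S x y) / W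
        - (\<Sum>x\<in>V. \<Sum>y\<in>nbrs V E x. boundary_weight S y x) / W"
    by (simp add: diff_divide_distrib sum_subtractf sum_divide_distrib)
  also have "\<dots> = 0"
    by (simp only: flows_cancel diff_self)
  finally have "0 = (\<Sum>x\<in>V. \<Sum>y\<in>nbrs V E x. (boundary_weight S x y - boundary_weight S y x) / W)"
    by simp
  also have "\<dots> \<le> step (\<lambda>U. phi U - phi S) S"
    unfolding moran_step_def W_def by (intro sum_mono phi_change_lower_bound[OF S])
  also have "\<dots> = step phi S - phi S"
    using step_minus_const[OF S] .
  finally show ?thesis by simp
qed

lemma transient_has_boundary_edge:
  assumes S: "S \<subseteq> V" and "S \<noteq> {}" and "S \<noteq> V"
  shows "\<exists>x y. x \<in> S \<and> y \<in> nbrs V E x \<and> y \<notin> S"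
proof -
  obtain a b where a: "a \<in> S" and b: "b \<in> V" "b \<notin> S"
    using assms by blast
  have "(a, b) \<in> {(u, v). E u v}\<^sup>*"
    using connected[OF subsetD[OF S a] b(1)] .
  then obtain x y where "x \<in> S" "y \<notin> S" "E x y"
    using path_crosses_boundary[OF _ a b(2)] by blast
  then show ?thesis
    using edge_in_V by (auto simp: nbrs_def)
qed

text \<open>Every mutant reproduction along a given edge has probability at least
  \<open>1/n\<^sup>2\<close> and moves the potential by at least \<open>1/n\<close>.\<close>
lemma transition_lower_bound:
  assumes S: "S \<subseteq> V" and x: "x \<in> V" and y: "y \<in> V"
  shows "1 / real (card V) ^ 4 \<le> r / total_fitness V r S * (1 / deg x) * (1 / deg y)\<^sup>2"
proof -
  define n where "n = real (card V)"
  have "n > 0" and W: "total_fitness V r S > 0"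
    using nonempty finite_V total_fitness_pos[OF S] by (auto simp: n_def card_gt_0_iff)
  have fit_bound: "1 / n \<le> r / total_fitness V r S"
    using total_fitness_le[OF S] \<open>n > 0\<close> W by (simp add: n_def divide_simps mult.commute)
  have deg_bound: "1 / n \<le> 1 / deg v" if "v \<in> V" for v
    using deg_pos[OF that] deg_le_card[of v] \<open>n > 0\<close> by (simp add: n_def divide_simps)
  have prod_bound: "(1 / n) * (1 / n) \<le> r / total_fitness V r S * (1 / deg x)"
    using \<open>n > 0\<close> W r_pos by (intro mult_mono[OF fit_bound deg_bound[OF x]]) auto
  have square_bound: "(1 / n)\<^sup>2 \<le> (1 / deg y)\<^sup>2"
    using \<open>n > 0\<close> by (intro power_mono[OF deg_bound[OF y]]) simp
  have "0 \<le> r / total_fitness V r S * (1 / deg x)"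
    using W r_pos by simp
  then have "(1 / n) * (1 / n) * (1 / n)\<^sup>2 \<le> r / total_fitness V r S * (1 / deg x) * (1 / deg y)\<^sup>2"
    using prod_bound square_bound zero_le_power2 by (metis mult_mono)
  then show ?thesis
    by (simp add: n_def power2_eq_square power4_eq_xxxx)
qed

lemma squared_jump_lower_bound:
  assumes S: "S \<subseteq> V" and "S \<noteq> {}" and "S \<noteq> V"
  shows "1 / real (card V) ^ 4 \<le> step (\<lambda>U. (phi U - phi S)\<^sup>2) S"
proof -
  obtain x0 y0 where x0: "x0 \<in> S" and y0: "y0 \<in> nbrs V E x0" "y0 \<notin> S"
    using transient_has_boundary_edge[OF assms] by blast
  have x0V: "x0 \<in> V" and y0V: "y0 \<in> V"
    using x0 y0 S nbrs_subset by auto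
  define t where "t x y = fit r S x / total_fitness V r S * (1 / deg x) *
      (phi (moran_update S x y) - phi S)\<^sup>2" for x y
  have t_nonneg: "t x y \<ge> 0" if "x \<in> V" for x y
    unfolding t_def by (rule mult_nonneg_nonneg[OF transition_weight_nonneg[OF S]]) simp
  have "1 / real (card V) ^ 4 \<le> t x0 y0"
    using transition_lower_bound[OF S x0V y0V] phi_update[OF S] x0 y0
    by (simp add: t_def fit_def)
  also have "\<dots> \<le> (\<Sum>y\<in>nbrs V E x0. t x0 y)"
    using y0 finite_nbrs t_nonneg[OF x0V] by (intro member_le_sum) auto
  also have "\<dots> \<le> (\<Sum>x\<in>V. \<Sum>y\<in>nbrs V E x. t x y)"
    using x0V finite_V t_nonneg by (intro member_le_sum sum_nonneg) auto
  also have "\<dots> = step (\<lambda>U. (phi U - phi S)\<^sup>2) S"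
    unfolding moran_step_def t_def by simp
  finally show ?thesis .
qed

lemma phi_square_increment:
  assumes S: "S \<subseteq> V"
  shows "(phi S)\<^sup>2 + 1 / real (card V) ^ 4 * transient V S \<le> step (\<lambda>U. (phi U)\<^sup>2) S"
proof -
  have "phi S * phi S \<le> phi S * step phi S"
    using phi_submartingale[OF S] phi_nonneg by (rule mult_left_mono)
  then have "(phi S)\<^sup>2 + step (\<lambda>U. (phi U - phi S)\<^sup>2) S \<le> step (\<lambda>U. (phi U)\<^sup>2) S"
    using step_square[OF S, of phi] by (simp add: power2_eq_square)
  moreover have "1 / real (card V) ^ 4 * transient V S \<le> step (\<lambda>U. (phi U - phi S)\<^sup>2) S"
  proof (cases "S \<noteq> {} \<and> S \<noteq> V")
    case True
    then show ?thesis
      using squared_jump_lower_bound[OF S] by (simp add: transient_def)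
  next
    case False
    have "step (\<lambda>U. 0) S \<le> step (\<lambda>U. (phi U - phi S)\<^sup>2) S"
      using S by (rule step_mono) simp
    then show ?thesis
      using False step_const[OF S, of 0] by (auto simp: transient_def)
  qed
  ultimately show ?thesis by linarith
qed


lemma phi_square_iter:
  assumes S: "S \<subseteq> V"
  shows "(phi S)\<^sup>2 + 1 / real (card V) ^ 4 * (\<Sum>j<k. (step ^^ j) (transient V) S)
    \<le> (step ^^ k) (\<lambda>U. (phi U)\<^sup>2) S"
proof (induction k)
  case 0
  then show ?case by simp
next
  case (Suc k)
  define c where "c = 1 / real (card V) ^ 4"
  have "(step ^^ k) (\<lambda>U. 1 * (phi U)\<^sup>2 + c * transient V U) S
      \<le> (step ^^ k) (step (\<lambda>U. (phi U)\<^sup>2)) S"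
    using phi_square_increment S by (intro iter_mono) (simp_all add: c_def)
  then have "1 * (step ^^ k) (\<lambda>U. (phi U)\<^sup>2) S + c * (step ^^ k) (transient V) S
      \<le> (step ^^ Suc k) (\<lambda>U. (phi U)\<^sup>2) S"
    by (simp only: moran_iter_linear moran_iter_Suc_right)
  then show ?case
    using Suc.IH by (simp add: c_def distrib_left)
qed

text \<open>Since \<open>phi\<^sup>2 \<le> phi(V)\<^sup>2\<close> and it grows by \<open>1/n\<^sup>4\<close> per transient step, the
  probability of still being transient after \<open>k\<close> steps is \<open>O(1/k)\<close>.\<close>
lemma transient_iter_bound:
  assumes S: "S \<subseteq> V"
  shows "real k * (step ^^ k) (transient V) S \<le> (phi V)\<^sup>2 * real (card V) ^ 4"
proof -
  have n_pos: "real (card V) > 0"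
    using finite_V nonempty by (simp add: card_gt_0_iff)
  have "(step ^^ k) (\<lambda>U. (phi U)\<^sup>2) S \<le> (step ^^ k) (\<lambda>U. (phi V)\<^sup>2) S"
    using S by (intro iter_mono power_mono phi_le_phi_V phi_nonneg)
  then have "1 / real (card V) ^ 4 * (\<Sum>j<k. (step ^^ j) (transient V) S) \<le> (phi V)\<^sup>2"
    using phi_square_iter[OF S, of k] iter_const[OF S, of k "(phi V)\<^sup>2"] zero_le_power2[of "phi S"]
    by linarith
  then have sum_bound: "(\<Sum>j<k. (step ^^ j) (transient V) S) \<le> (phi V)\<^sup>2 * real (card V) ^ 4"
    using n_pos by (simp add: field_simps)
  have "real k * (step ^^ k) (transient V) S = (\<Sum>j<k. (step ^^ k) (transient V) S)"
    by simp
  also have "\<dots> \<le> (\<Sum>j<k. (step ^^ j) (transient V) S)"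
    by (intro sum_mono transient_iter_antimono[OF S]) simp
  finally show ?thesis
    using sum_bound by linarith
qed

lemma phi_iter: "S \<subseteq> V \<Longrightarrow> phi S \<le> (step ^^ k) phi S"
proof (induction k)
  case 0
  then show ?case by simp
next
  case (Suc k)
  have "(step ^^ k) phi S \<le> (step ^^ k) (step phi) S"
    using phi_submartingale Suc.prems by (rule iter_mono)
  then show ?case
    using Suc.IH[OF Suc.prems] unfolding moran_iter_Suc_right by linarith
qed

text \<open>The submartingale bound: \<open>phi(U) \<le> phi(V) ([U = V] + [U transient])\<close>.\<close>
lemma reach_V_lower_bound:
  assumes S: "S \<subseteq> V" and k: "k > 0"
  shows "phi S / phi V - (phi V)\<^sup>2 * real (card V) ^ 4 / real k \<le> reach_V V E r k S"
proof -
  have "(step ^^ k) phi S \<le> (step ^^ k) (\<lambda>U. phi V * full_indicator V U + phi V * transient V U) S"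
    using phi_le_phi_V phi_nonneg S
    by (intro iter_mono) (auto simp: full_indicator_def transient_def inv_degree_sum_def)
  then have "phi S \<le> phi V * reach_V V E r k S + phi V * (step ^^ k) (transient V) S"
    using phi_iter[OF S, of k] by (simp add: moran_iter_linear reach_V_eq_iter)
  moreover have "(step ^^ k) (transient V) S \<le> (phi V)\<^sup>2 * real (card V) ^ 4 / real k"
    using transient_iter_bound[OF S, of k] k by (simp add: field_simps)
  ultimately have "phi S \<le> phi V * reach_V V E r k S + phi V * ((phi V)\<^sup>2 * real (card V) ^ 4 / real k)"
    using phi_V_pos by (smt (verit) mult_left_mono)
  then show ?thesis
    using phi_V_pos by (simp add: field_simps)
qed

lemma fixation_lower_bound:
  assumes S: "S \<subseteq> V"
  shows "phi S / phi V \<le> fixation_prob V E r S"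
proof (rule field_le_epsilon)
  fix e :: real
  assume "e > 0"
  define C where "C = (phi V)\<^sup>2 * real (card V) ^ 4"
  obtain k :: nat where "C / e < real k"
    using reals_Archimedean2 by blast
  moreover have "C / e \<ge> 0"
    using \<open>e > 0\<close> by (simp add: C_def)
  ultimately have "real k > 0"
    by linarith
  then have k: "k > 0" and "C / real k < e"
    using \<open>C / e < real k\<close> \<open>e > 0\<close> by (simp_all add: field_simps)
  have "bdd_above (range (\<lambda>k. reach_V V E r k S))"
    using reach_V_le_1[OF S] by (intro bdd_aboveI2) auto
  then have "reach_V V E r k S \<le> fixation_prob V E r S"
    unfolding fixation_prob_def by (rule cSUP_upper[rotated]) simp
  then show "phi S / phi V \<le> fixation_prob V E r S + e"
    using reach_V_lower_bound[OF S k] \<open>C / real k < e\<close> by (simp add: C_def)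
qed
end

text \<open>A connected graph on at least two vertices has no isolated vertex, so the
  hypotheses of the theorem put us in the setting of \<open>advantageous_moran\<close>.\<close>
lemma advantageous_moranI:
  assumes conn: "connected_graph V E" and two: "card V \<ge> 2" and r: "r \<ge> 1"
  shows "advantageous_moran V E r"
proof
  show "graph V E" and connected: "\<And>a b. a \<in> V \<Longrightarrow> b \<in> V \<Longrightarrow> (a, b) \<in> {(u, v). E u v}\<^sup>*"
    using conn by (auto simp: connected_graph_def)
  show "r > 0" and "r \<ge> 1"
    using r by simp_all
  show "V \<noteq> {}"
    using two by auto
  fix x
  assume x: "x \<in> V"
  have "finite V"
    using conn by (simp add: connected_graph_def graph_def)
  then have "card (V - {x}) > 0"
    using two x by (simp add: card_Diff_singleton)
  then obtain y where y: "y \<in> V" "y \<noteq> x"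
    by (metis Diff_iff card.empty ex_in_conv less_irrefl singletonI)
  have "(x, y) \<in> {(u, v). E u v}\<^sup>*"
    using connected[OF x y(1)] .
  then obtain z where "E x z"
    using path_crosses_boundary[of x y E "{x}"] y(2) by blast
  then show "nbrs V E x \<noteq> {}"
    using conn by (auto simp: nbrs_def connected_graph_def graph_def)
qed

theorem lemma1:
  fixes V :: "'a set" and E :: "'a \<Rightarrow> 'a \<Rightarrow> bool" and r :: real
  assumes "connected_graph V E"
    and "card V \<ge> 2"
    and "r \<ge> 1"
  shows "fix_prob V E r \<ge> 1 / real (card V)"
proof -
  interpret advantageous_moran V E r
    using assms by (rule advantageous_moranI)
  have "(\<Sum>x\<in>V. phi {x} / phi V) = (\<Sum>x\<in>V. phi {x}) / phi V"
    by (simp only: sum_divide_distrib)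
  also have "(\<Sum>x\<in>V. phi {x}) = phi V"
    by (simp add: inv_degree_sum_def)
  also have "phi V / phi V = 1"
    using phi_V_pos by simp
  finally have singletons: "(\<Sum>x\<in>V. phi {x} / phi V) = 1" .
  have "(\<Sum>x\<in>V. phi {x} / phi V) \<le> (\<Sum>x\<in>V. fix_prob_vertex V E r x)"
    unfolding fix_prob_vertex_def by (intro sum_mono fixation_lower_bound) simp
  then have "1 \<le> (\<Sum>x\<in>V. fix_prob_vertex V E r x)"
    using singletons by simp
  then show ?thesis
    unfolding fix_prob_def by (simp add: divide_right_mono)
qed

end
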